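(* Let $\rho>0$ and let $k$ be a nonzero integer. For $X=\alpha\rho>0$ define \[ Z_k(X)=\frac{X^2\left(1-(-1)^k e^{-\pi X}\right)}{\left(k^2+X^2\right)\left(1-e^{-\pi X}\right)}. \] Then $Z_k$ is monotonically increasing in $X=\alpha\rho$, and \[ \lim_{\alpha\rho\to 0} Z_k=0,\qquad \lim_{\alpha\rho\to\infty} Z_k=1 . \]
   Context: Here $\alpha=(\sigma-1)\tau\ge 0$, where $\sigma>1$ is an elasticity of substitution and $\tau\ge0$ a transport-cost parameter, and $\rho>0$ is the radius of a circle; $Z_k$ depends on $\alpha$ and $\rho$ only through the product $\alpha\rho$. *)

theory Defs
  imports "HOL-Analysis.Analysis"
begin

definition Zk :: "int \<Rightarrow> real \<Rightarrow> real" where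
  "Zk k X = X^2 * (1 - (-1) ^ nat \<bar>k\<bar> * exp (-pi * X)) /
            ((real_of_int k ^ 2 + X^2) * (1 - exp (-pi * X)))"

end

theory Submission
  imports Defs "HOL-Real_Asymp.Real_Asymp"
begin

(* Put c = k^2 and E = exp (-pi X). For even k the factor 1 - E cancels and Z_k = X^2 / (c + X^2),
   which is plainly increasing. For odd k the numerator of the derivative of
   X^2 (1 + E) / ((c + X^2) (1 - E)) is 2 X E (c (exp y - exp (-y)) - y (c + X^2)) with y = pi X.
   It is nonnegative because exp y - exp (-y) >= 2 y + y^3/6 and y X^2 = y^3 / pi^2 <= c y^3 / 6.
   Both limits are routine asymptotics. *)

definition Zeven :: "real \<Rightarrow> real \<Rightarrow> real" where
  "Zeven c X = X^2 / (c + X^2)"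

definition Zodd :: "real \<Rightarrow> real \<Rightarrow> real" where
  "Zodd c X = X^2 * (1 + exp (-pi * X)) / ((c + X^2) * (1 - exp (-pi * X)))"

lemma Zk_eq_Zeven_Zodd:
  "Zk k = (if even k then Zeven (real_of_int k ^ 2) else Zodd (real_of_int k ^ 2))"
proof (rule ext)
  fix X :: real
  \<comment> \<open>At X = 0 the identity relies on x / 0 = 0.\<close>
  have parity: "(-1::real) ^ nat \<bar>k\<bar> = (if even k then 1 else -1)"
    by (simp add: even_nat_iff)
  show "Zk k X = (if even k then Zeven (real_of_int k ^ 2) else Zodd (real_of_int k ^ 2)) X"
    by (cases "X = 0") (auto simp: Zk_def Zeven_def Zodd_def parity)
qed

lemma exp_ge_Taylor_cubic:
  fixes y :: real
  assumes "0 \<le> y"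
  shows "1 + y + y^2/2 + y^3/6 \<le> exp y"
proof -
  obtain t where "exp y = (\<Sum>m<4. y ^ m / fact m) + exp t / fact 4 * y ^ 4"
    using Maclaurin_exp_le[of y 4] by blast
  moreover have "(\<Sum>m<4. y ^ m / fact m) = 1 + y + y^2/2 + y^3/6"
    by (simp add: fact_numeral eval_nat_numeral)
  moreover have "0 \<le> exp t / fact 4 * y ^ 4"
    using assms by simp
  ultimately show ?thesis
    by linarith
qed

lemma exp_minus_le_Taylor_quadratic:
  fixes y :: real
  assumes "0 \<le> y"
  shows "exp (-y) \<le> 1 - y + y^2/2"
proof -
  obtain t where "exp (-y) = (\<Sum>m<3. (-y) ^ m / fact m) + exp t / fact 3 * (-y) ^ 3"
    using Maclaurin_exp_le[of "-y" 3] by blast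
  moreover have "(\<Sum>m<3. (-y) ^ m / fact m) = 1 - y + y^2/2"
    by (simp add: fact_numeral eval_nat_numeral)
  moreover have "exp t / fact 3 * (-y) ^ 3 \<le> 0"
    using assms by (simp add: mult_nonneg_nonpos)
  ultimately show ?thesis
    by linarith
qed

lemma exp_minus_exp_minus_ge_cubic:
  fixes y :: real
  assumes "0 \<le> y"
  shows "2 * y + y^3/6 \<le> exp y - exp (-y)"
  using exp_ge_Taylor_cubic[OF assms] exp_minus_le_Taylor_quadratic[OF assms] by simp

lemma pi_mult_le_exp_minus_exp_minus:
  fixes c X :: real
  assumes c: "1 \<le> c" and X: "0 \<le> X"
  shows "pi * X * (c + X^2) \<le> c * (exp (pi * X) - exp (-pi * X))"
proof -
  define y where "y = pi * X"
  have y: "0 \<le> y"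
    using X by (simp add: y_def)
  have "6 \<le> pi^2"
    using mult_mono[of 3 pi 3 pi] pi_gt3 by (simp add: power2_eq_square)
  have "y * (c + X^2) = c * y + y^3 / pi^2"
    by (simp add: y_def field_simps power3_eq_cube power2_eq_square)
  also have "\<dots> \<le> c * y + y^3 / 6"
    using \<open>6 \<le> pi^2\<close> y by (intro add_left_mono divide_left_mono) auto
  also have "\<dots> \<le> c * y + c * y + c * (y^3 / 6)"
  proof -
    have "0 \<le> c * y" "y^3 / 6 \<le> c * (y^3 / 6)"
      using mult_right_mono[of 1 c "y^3 / 6"] c y by auto
    then show ?thesis
      by linarith
  qed
  also have "\<dots> = c * (2 * y + y^3/6)"
    by (simp add: algebra_simps)
  also have "\<dots> \<le> c * (exp y - exp (-y))"
    using c exp_minus_exp_minus_ge_cubic[OF y] by (intro mult_left_mono) auto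
  finally show ?thesis
    by (simp add: y_def)
qed

lemma has_real_derivative_Zodd:
  fixes c X :: real
  assumes c: "0 < c" and X: "0 < X"
  defines "E \<equiv> exp (-pi * X)"
  shows "(Zodd c has_real_derivative
           2 * X * E * (c * (exp (pi * X) - E) - pi * X * (c + X^2)) / ((c + X^2) * (1 - E))^2) (at X)"
proof -
  have E: "exp (pi * X) * E = 1"
    by (simp add: E_def flip: exp_add)
  have "((\<lambda>X. X^2 * (1 + exp (-pi * X))) has_real_derivative 2 * X * (1 + E) - X^2 * pi * E) (at X)"
    unfolding E_def by (auto intro!: derivative_eq_intros simp: algebra_simps)
  moreover have "((\<lambda>X. (c + X^2) * (1 - exp (-pi * X))) has_real_derivative
      2 * X * (1 - E) + (c + X^2) * pi * E) (at X)"
    unfolding E_def by (auto intro!: derivative_eq_intros simp: algebra_simps)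
  moreover have "(c + X^2) * (1 - exp (-pi * X)) \<noteq> 0"
    using add_pos_nonneg[OF c, of "X^2"] X by simp
  ultimately have "(Zodd c has_real_derivative
      ((2 * X * (1 + E) - X^2 * pi * E) * ((c + X^2) * (1 - E))
       - X^2 * (1 + E) * (2 * X * (1 - E) + (c + X^2) * pi * E)) / ((c + X^2) * (1 - E))^2) (at X)"
    using DERIV_divide unfolding Zodd_def[abs_def] E_def power2_eq_square by blast
  moreover have "(2 * X * (1 + E) - X^2 * pi * E) * ((c + X^2) * (1 - E))
       - X^2 * (1 + E) * (2 * X * (1 - E) + (c + X^2) * pi * E)
     = 2 * X * E * (c * (exp (pi * X) - E) - pi * X * (c + X^2))"
    using E by (simp add: algebra_simps power2_eq_square)
  ultimately show ?thesis
    by simp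
qed

lemma mono_on_Zodd:
  assumes c: "1 \<le> c"
  shows "mono_on {0<..} (Zodd c)"
proof (rule mono_onI)
  fix x y :: real
  assume "x \<in> {0<..}" "x \<le> y"
  have "\<exists>D. (Zodd c has_real_derivative D) (at X) \<and> 0 \<le> D" if "x \<le> X" for X
  proof (rule exI, rule conjI[OF has_real_derivative_Zodd])
    show "0 < c"
      using c by simp
    show "0 < X"
      using \<open>x \<in> {0<..}\<close> that by simp
    then show "0 \<le> 2 * X * exp (-pi * X) * (c * (exp (pi * X) - exp (-pi * X)) - pi * X * (c + X^2))
        / ((c + X^2) * (1 - exp (-pi * X)))^2"
      using pi_mult_le_exp_minus_exp_minus[OF c, of X] by simp
  qed
  then show "Zodd c x \<le> Zodd c y"
    using DERIV_nonneg_imp_nondecreasing[OF \<open>x \<le> y\<close>] by blast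
qed

lemma mono_on_Zeven:
  assumes "0 < c"
  shows "mono_on {0..} (Zeven c)"
proof (rule mono_onI)
  fix x y :: real
  assume "x \<in> {0..}" "y \<in> {0..}" "x \<le> y"
  then have "x^2 \<le> y^2"
    by (intro power_mono) auto
  then have "x^2 * (c + y^2) \<le> y^2 * (c + x^2)"
    using assms by (simp add: algebra_simps mult_left_mono)
  then show "Zeven c x \<le> Zeven c y"
    using assms by (simp add: Zeven_def divide_simps add_pos_nonneg)
qed

lemma Zeven_tendsto:
  assumes "0 < c"
  shows "(Zeven c \<longlongrightarrow> 0) (at_right 0)" "(Zeven c \<longlongrightarrow> 1) at_top"
  unfolding Zeven_def using assms by real_asymp+

lemma Zodd_tendsto:
  assumes "0 < c"
  shows "(Zodd c \<longlongrightarrow> 0) (at_right 0)" "(Zodd c \<longlongrightarrow> 1) at_top"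
  unfolding Zodd_def using assms by real_asymp+

theorem lemma1:
  fixes k :: int
  assumes "k \<noteq> 0"
  shows "mono_on {0<..} (Zk k)
         \<and> (Zk k \<longlongrightarrow> 0) (at_right 0)
         \<and> (Zk k \<longlongrightarrow> 1) at_top"
proof -
  define c where "c = real_of_int k ^ 2"
  have "1 \<le> \<bar>k\<bar>"
    using assms by linarith
  then have "1 \<le> c"
    unfolding c_def by (metis of_int_1_le_iff of_int_power one_le_power power2_abs)
  show ?thesis
  proof (cases "even k")
    case True
    then have "Zk k = Zeven c"
      by (simp add: Zk_eq_Zeven_Zodd c_def)
    moreover have "mono_on {0<..} (Zeven c)"
      using mono_on_Zeven[of c] \<open>1 \<le> c\<close> by (auto intro: mono_on_subset)
    ultimately show ?thesis
      using Zeven_tendsto[of c] \<open>1 \<le> c\<close> by simp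
  next
    case False
    then have "Zk k = Zodd c"
      by (simp add: Zk_eq_Zeven_Zodd c_def)
    then show ?thesis
      using mono_on_Zodd[OF \<open>1 \<le> c\<close>] Zodd_tendsto[of c] \<open>1 \<le> c\<close> by simp
  qed
qed

end
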